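(* Fix integers $K\ge 1$, $R_1\ge 1$, $R_2\ge 1$. For $\alpha>0$ let $L_k^\alpha$, $W^\alpha_{k,r}$, $T^\alpha$ and $N^\alpha$ be as defined in the context (obtained from the coupled construction by restriction to $[0,\alpha]^{R_1}$). Then: (i) for every fixed $\alpha>0$, $N^\alpha<\infty$ almost surely; (ii) $N^\alpha\to\infty$ almost surely as $\alpha\to\infty$.
   Context: A Gamma process $\Gamma\mathrm{P}(\mu_0)$ with base measure $\mu_0$ on a space $\Theta$ is the completely random measure $G=\sum_j w_j\delta_{\theta_j}$ whose atoms $\{(w_j,\theta_j)\}$ form a Poisson point process on $(0,\infty)\times\Theta$ with intensity $w^{-1}e^{-w}\,dw\,\mu_0(d\theta)$; in particular $G(B)\sim\mathrm{Gamma}(\text{shape }\mu_0(B),\text{ rate }1)$ and $G$ is independent on disjoint sets. A Poisson random measure $\mathrm{PRM}(\mu)$ with (σ-finite) mean measure $\mu$ is a random integer-valued measure with $\mathrm{Poisson}(\mu(B))$ counts on each $B$, independent on disjoint sets. Coupled construction: let $\lambda$ be Lebesgue measure on $[0,\infty)^{R_1}$. For $k=1,\dots,K$ independently, let $L_k\sim\Gamma\mathrm{P}(\lambda)$, $L_k=\sum_j w_{kj}\delta_{\theta^k_j}$. Conditionally on $L_1,\dots,L_K$, for each $k$ and $r=1,\dots,R_2$ independently let $W_{k,r}\sim\Gamma\mathrm{P}(L_k)$ (so $W_{k,r}=\sum_j v_{krj}\delta_{\theta^k_j}$ shares the atoms of $L_k$). Conditionally on all $W_{k,r}$, let $T\sim\mathrm{PRM}\big(\sum_{r=1}^{R_2}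 W_{1,r}\times\cdots\times W_{K,r}\big)$ on $([0,\infty)^{R_1})^K$. For $\alpha>0$ let $L_k^\alpha, W^\alpha_{k,r}, T^\alpha$ be the restrictions of $L_k, W_{k,r}, T$ to $[0,\alpha]^{R_1}$ (respectively $([0,\alpha]^{R_1})^K$); then $L_k^\alpha\sim\Gamma\mathrm{P}(\lambda_\alpha)$ with $\lambda_\alpha$ Lebesgue measure restricted to $[0,\alpha]^{R_1}$, $W^\alpha_{k,r}\mid L^\alpha_k\sim\Gamma\mathrm{P}(L^\alpha_k)$, and $T^\alpha\sim\mathrm{PRM}(\sum_r W^\alpha_{1,r}\times\cdots\times W^\alpha_{K,r})$. Each point of $T^\alpha$ has the form $(\theta^1_{i_1},\dots,\theta^K_{i_K})$ and is identified with the tensor entry index $(i_1,\dots,i_K)$. $N^\alpha$ denotes the number of distinct points (distinct entry indices) in the support of $T^\alpha$. *)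

theory Defs
  imports "HOL-Probability.Probability"
begin

definition gamma_pdf :: "real \<Rightarrow> real \<Rightarrow> real" where
  "gamma_pdf a x = (if 0 < x then x powr (a - 1) * exp (- x) / Gamma a else 0)"

definition gamma_law :: "ennreal \<Rightarrow> ennreal measure" where
  "gamma_law s =
     (if s = 0 then return borel 0
      else if s = \<top> then return borel \<top>
      else distr (density lborel (\<lambda>x. ennreal (gamma_pdf (enn2real s) x))) borel ennreal)"

definition poisson_law :: "ennreal \<Rightarrow> ennreal measure" where
  "poisson_law m =
     (if m = 0 then return borel 0
      else if m = \<top> then return borel \<top>
      else distr (measure_pmf (poisson_pmf (enn2real m))) borel of_nat)"

definition rm_events :: "'w measure \<Rightarrow> ('w \<Rightarrow> 'a measure) set \<Rightarrow> 'w set set" where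
  "rm_events M Xs = sigma_sets (space M)
     {{\<omega> \<in> space M. emeasure (X \<omega>) B \<in> C} | X B C. X \<in> Xs \<and> C \<in> sets (borel :: ennreal measure)}"

text \<open>Conditionally on the events F, the random measures X i (on the measurable space S) are
  independent over i, each X i has independent increments on disjoint sets, and
  X i (B) has law D (\<mu> i \<omega> B). With D = gamma_law this says X i ~ Gamma process with base
  measure \<mu> i; with D = poisson_law it says X i ~ Poisson random measure with mean measure \<mu> i.\<close>
definition cond_indep_law ::
  "'w measure \<Rightarrow> 'w set set \<Rightarrow> 'a measure \<Rightarrow> ('i \<Rightarrow> 'w \<Rightarrow> 'a measure)
     \<Rightarrow> ('i \<Rightarrow> 'w \<Rightarrow> 'a set \<Rightarrow> ennreal) \<Rightarrow> (ennreal \<Rightarrow> ennreal measure) \<Rightarrow> bool" where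
  "cond_indep_law M F S X \<mu> D \<longleftrightarrow>
     (\<forall>i. \<forall>\<omega>\<in>space M. sets (X i \<omega>) = sets S) \<and>
     (\<forall>i. \<forall>B\<in>sets S. (\<lambda>\<omega>. emeasure (X i \<omega>) B) \<in> borel_measurable M) \<and>
     (\<forall>(n::nat) (j::nat \<Rightarrow> 'i) (B::nat \<Rightarrow> 'a set) (C::nat \<Rightarrow> ennreal set) E.
        E \<in> F \<and> (\<forall>m<n. B m \<in> sets S \<and> C m \<in> sets borel) \<and>
        (\<forall>m<n. \<forall>m'<n. m \<noteq> m' \<and> j m = j m' \<longrightarrow> B m \<inter> B m' = {}) \<longrightarrow>
        emeasure M (E \<inter> {\<omega> \<in> space M. \<forall>m<n. emeasure (X (j m) \<omega>) (B m) \<in> C m})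
          = (\<integral>\<^sup>+\<omega>. indicator E \<omega> * (\<Prod>m<n. emeasure (D (\<mu> (j m) \<omega> (B m))) (C m)) \<partial>M))"

text \<open>Lebesgue measure on [0,\<infinity>)^R1, R1 = CARD('d).\<close>
definition orthant_lebesgue :: "(real^'d::finite) measure" where
  "orthant_lebesgue = density lborel (indicator {x. \<forall>i. 0 \<le> x $ i})"

text \<open>Ground measurable space of T: K-tuples (K = CARD('k)) of points of R^R1.\<close>
definition tuple_space :: "('k::finite \<Rightarrow> real^'d::finite) measure" where
  "tuple_space = PiM UNIV (\<lambda>_. borel)"

definition T_mean :: "('k::finite \<Rightarrow> 'r::finite \<Rightarrow> (real^'d::finite) measure)
     \<Rightarrow> ('k \<Rightarrow> real^'d) set \<Rightarrow> ennreal" where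
  "T_mean W B = (\<Sum>r\<in>UNIV. emeasure (PiM UNIV (\<lambda>k. W k r)) B)"

definition coupled_construction ::
  "'w measure \<Rightarrow> ('k::finite \<Rightarrow> 'w \<Rightarrow> (real^'d::finite) measure)
     \<Rightarrow> ('k \<Rightarrow> 'r::finite \<Rightarrow> 'w \<Rightarrow> (real^'d) measure)
     \<Rightarrow> ('w \<Rightarrow> ('k \<Rightarrow> real^'d) measure) \<Rightarrow> bool" where
  "coupled_construction M L W T \<longleftrightarrow>
     prob_space M \<and>
     cond_indep_law M {space M} borel L (\<lambda>k \<omega> B. emeasure orthant_lebesgue B) gamma_law \<and>
     cond_indep_law M (rm_events M (range L)) borel (\<lambda>(k, r). W k r)
        (\<lambda>(k, r) \<omega> B. emeasure (L k \<omega>) B) gamma_law \<and>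
     cond_indep_law M (rm_events M (range L \<union> range (\<lambda>(k, r). W k r))) tuple_space
        (\<lambda>_::unit. T) (\<lambda>_ \<omega> B. T_mean (\<lambda>k r. W k r \<omega>) B) poisson_law"

text \<open>The box ([0,\<alpha>]^R1)^K and the set of distinct points of T^\<alpha> (atoms of T in the box).\<close>
definition box :: "real \<Rightarrow> ('k::finite \<Rightarrow> real^'d::finite) set" where
  "box \<alpha> = {x. \<forall>k i. 0 \<le> x k $ i \<and> x k $ i \<le> \<alpha>}"

definition points_T :: "real \<Rightarrow> ('k::finite \<Rightarrow> real^'d::finite) measure \<Rightarrow> ('k \<Rightarrow> real^'d) set" where
  "points_T \<alpha> \<nu> = {x \<in> box \<alpha>. emeasure \<nu> {x} > 0}"

end

theory Submission
  imports Defs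
begin

text \<open>
  (i) Lebesgue measure is finite on bounded sets, hence so are (almost surely) the L_k, the W_{k,r}
  and the mean measure of T; so T is almost surely a finite integer-valued measure on every box
  and on every dyadic cell inside it. For such a measure every atom has mass at least 1, being the
  limit of the masses of the dyadic cells shrinking to it, so a box contains only finitely many
  atoms.

  (ii) Consider the pairwise disjoint cubes D_m = ([2m, 2m+1]^R1)^K and fix some r. The values
  L_k([2m, 2m+1]^R1) are iid Gamma(1), so the events "W_{k,r}([2m, 2m+1]^R1) > 1 for all k" are
  independent over m, with a common probability q > 0. On such an event the mean of T(D_m) is at
  least 1, so T(D_m) = 0 has conditional probability at most e^-1. Hence the probability that
  T(D_m) = 0 for all m in a finite set S is at most (1 - (1 - e^-1) q)^|S|, and almost surely
  infinitely many D_m carry mass. Each of them contains an atom of T, which yields unboundedly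
  many distinct atoms in the growing boxes.
\<close>

section \<open>Conditionally independent random measures\<close>

lemma cond_indep_law_sets:
  "cond_indep_law M F S X \<mu> D \<Longrightarrow> \<omega> \<in> space M \<Longrightarrow> sets (X i \<omega>) = sets S"
  unfolding cond_indep_law_def by blast

lemma cond_indep_law_measurable:
  "cond_indep_law M F S X \<mu> D \<Longrightarrow> B \<in> sets S \<Longrightarrow> (\<lambda>\<omega>. emeasure (X i \<omega>) B) \<in> borel_measurable M"
  unfolding cond_indep_law_def by blast

lemma emeasure_cond_indep_law:
  assumes law: "cond_indep_law M F S X \<mu> D" and E: "E \<in> F" and I: "finite I"
    and B: "\<And>a. a \<in> I \<Longrightarrow> B a \<in> sets S" and C: "\<And>a. a \<in> I \<Longrightarrow> C a \<in> sets borel"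
    and disj: "\<And>a b. a \<in> I \<Longrightarrow> b \<in> I \<Longrightarrow> a \<noteq> b \<Longrightarrow> j a = j b \<Longrightarrow> B a \<inter> B b = {}"
  shows "emeasure M (E \<inter> {\<omega>\<in>space M. \<forall>a\<in>I. emeasure (X (j a) \<omega>) (B a) \<in> C a})
     = (\<integral>\<^sup>+\<omega>. indicator E \<omega> * (\<Prod>a\<in>I. emeasure (D (\<mu> (j a) \<omega> (B a))) (C a)) \<partial>M)"
proof -
  obtain f where f: "bij_betw f {..<card I} I"
    using ex_bij_betw_nat_finite[OF I] by (auto simp: atLeast0LessThan)
  then have f_img: "f ` {..<card I} = I" and f_inj: "inj_on f {..<card I}"
    by (auto simp: bij_betw_def)
  have "\<forall>m<card I. (B \<circ> f) m \<in> sets S \<and> (C \<circ> f) m \<in> sets borel"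
    using B C f_img by auto
  moreover have "\<forall>m<card I. \<forall>m'<card I. m \<noteq> m' \<and> (j \<circ> f) m = (j \<circ> f) m' \<longrightarrow> (B \<circ> f) m \<inter> (B \<circ> f) m' = {}"
    using disj f_img f_inj unfolding inj_on_def by (metis comp_apply imageI lessThan_iff)
  ultimately have "emeasure M (E \<inter> {\<omega>\<in>space M. \<forall>m<card I. emeasure (X ((j \<circ> f) m) \<omega>) ((B \<circ> f) m) \<in> (C \<circ> f) m})
      = (\<integral>\<^sup>+\<omega>. indicator E \<omega> * (\<Prod>m<card I. emeasure (D (\<mu> ((j \<circ> f) m) \<omega> ((B \<circ> f) m))) ((C \<circ> f) m)) \<partial>M)"
    using E law[unfolded cond_indep_law_def, THEN conjunct2, THEN conjunct2, rule_format,
        where n="card I" and j="j \<circ> f" and B="B \<circ> f" and C="C \<circ> f" and E=E]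
    by blast
  moreover have "{\<omega>\<in>space M. \<forall>m<card I. emeasure (X ((j \<circ> f) m) \<omega>) ((B \<circ> f) m) \<in> (C \<circ> f) m}
      = {\<omega>\<in>space M. \<forall>a\<in>I. emeasure (X (j a) \<omega>) (B a) \<in> C a}"
  proof -
    have "(\<forall>a\<in>f ` {..<card I}. P a) \<longleftrightarrow> (\<forall>m<card I. P (f m))" for P
      by auto
    then show ?thesis
      by (simp only: f_img comp_apply)
  qed
  moreover have "(\<Prod>m<card I. emeasure (D (\<mu> ((j \<circ> f) m) \<omega> ((B \<circ> f) m))) ((C \<circ> f) m))
      = (\<Prod>a\<in>I. emeasure (D (\<mu> (j a) \<omega> (B a))) (C a))" for \<omega>
    using prod.reindex_bij_betw[OF f, of "\<lambda>a. emeasure (D (\<mu> (j a) \<omega> (B a))) (C a)"] by simp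
  ultimately show ?thesis
    by simp
qed

lemma AE_cond_indep_law_notin:
  assumes law: "cond_indep_law M F S X \<mu> D" and F: "space M \<in> F"
    and B: "B \<in> sets S" and C: "C \<in> sets borel"
    and null: "AE \<omega> in M. emeasure (D (\<mu> i \<omega> B)) C = 0"
  shows "AE \<omega> in M. emeasure (X i \<omega>) B \<notin> C"
proof -
  have "emeasure M (space M \<inter> {\<omega>\<in>space M. \<forall>a\<in>{i}. emeasure (X (id a) \<omega>) B \<in> C})
      = (\<integral>\<^sup>+\<omega>. indicator (space M) \<omega> * (\<Prod>a\<in>{i}. emeasure (D (\<mu> (id a) \<omega> B)) C) \<partial>M)"
    by (rule emeasure_cond_indep_law[OF law F]) (use B C in auto)
  also have "\<dots> = (\<integral>\<^sup>+\<omega>. 0 \<partial>M)"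
    by (rule nn_integral_cong_AE) (use null in auto)
  finally have "emeasure M {\<omega>\<in>space M. emeasure (X i \<omega>) B \<in> C} = 0"
    by (simp add: Int_absorb1)
  moreover have "{\<omega>\<in>space M. emeasure (X i \<omega>) B \<in> C} \<in> sets M"
    using cond_indep_law_measurable[OF law B] C by measurable
  ultimately show ?thesis
    by (auto simp: AE_iff_measurable)
qed

lemma space_in_rm_events: "space M \<in> rm_events M Xs"
  unfolding rm_events_def by (rule sigma_sets_top)

lemma distr_cond_indep_law_eq_PiM:
  assumes law: "cond_indep_law M F S X \<mu> D" and M: "prob_space M" and F: "space M \<in> F"
    and I: "finite I" and B: "\<And>a. a \<in> I \<Longrightarrow> B a \<in> sets S"
    and disj: "\<And>a b. a \<in> I \<Longrightarrow> b \<in> I \<Longrightarrow> a \<noteq> b \<Longrightarrow> j a = j b \<Longrightarrow> B a \<inter> B b = {}"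
    and const: "\<And>a \<omega>. a \<in> I \<Longrightarrow> \<omega> \<in> space M \<Longrightarrow> \<mu> (j a) \<omega> (B a) = s"
    and D: "prob_space (D s)" "sets (D s) = sets borel"
  shows "distr M (Pi\<^sub>M I (\<lambda>_. borel)) (\<lambda>\<omega>. \<lambda>a\<in>I. emeasure (X (j a) \<omega>) (B a)) = Pi\<^sub>M I (\<lambda>_. D s)"
    (is "distr M ?P ?\<Phi> = _")
proof -
  interpret D: product_sigma_finite "\<lambda>_. D s"
    using D(1) unfolding product_sigma_finite_def by (simp add: prob_space_imp_sigma_finite)
  have \<Phi>: "?\<Phi> \<in> measurable M ?P"
    using cond_indep_law_measurable[OF law B] by (intro measurable_restrict) auto
  show ?thesis
  proof (rule D.PiM_eqI[OF I])
    show "sets (distr M ?P ?\<Phi>) = sets (Pi\<^sub>M I (\<lambda>_. D s))"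
      using D(2) by (simp cong: sets_PiM_cong)
  next
    fix A assume A: "\<And>a. a \<in> I \<Longrightarrow> A a \<in> sets (D s)"
    then have "Pi\<^sub>E I A \<in> sets ?P"
      using D(2) by (intro sets_PiM_I_finite[OF I]) auto
    then have "emeasure (distr M ?P ?\<Phi>) (Pi\<^sub>E I A)
        = emeasure M (space M \<inter> {\<omega>\<in>space M. \<forall>a\<in>I. emeasure (X (j a) \<omega>) (B a) \<in> A a})"
      using \<Phi> by (simp add: emeasure_distr Int_commute) (auto intro!: arg_cong[where f="emeasure M"] simp: PiE_iff)
    also have "\<dots> = (\<integral>\<^sup>+\<omega>. indicator (space M) \<omega> * (\<Prod>a\<in>I. emeasure (D (\<mu> (j a) \<omega> (B a))) (A a)) \<partial>M)"
      using A D(2) by (intro emeasure_cond_indep_law[OF law F I B _ disj]) auto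
    also have "\<dots> = (\<integral>\<^sup>+\<omega>. indicator (space M) \<omega> * (\<Prod>a\<in>I. emeasure (D s) (A a)) \<partial>M)"
      by (intro nn_integral_cong) (simp add: const indicator_def)
    also have "\<dots> = (\<Prod>a\<in>I. emeasure (D s) (A a))"
      using prob_space.emeasure_space_1[OF M]
      by (simp add: mult.commute[of "indicator _ _"] nn_integral_cmult_indicator)
    finally show "emeasure (distr M ?P ?\<Phi>) (Pi\<^sub>E I A) = (\<Prod>a\<in>I. emeasure (D s) (A a))" .
  qed
qed

lemma nn_integral_prod_cond_indep_law:
  assumes law: "cond_indep_law M F S X \<mu> D" and M: "prob_space M" and F: "space M \<in> F"
    and I: "finite I" and B: "\<And>a. a \<in> I \<Longrightarrow> B a \<in> sets S"
    and disj: "\<And>a b. a \<in> I \<Longrightarrow> b \<in> I \<Longrightarrow> a \<noteq> b \<Longrightarrow> j a = j b \<Longrightarrow> B a \<inter> B b = {}"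
    and const: "\<And>a \<omega>. a \<in> I \<Longrightarrow> \<omega> \<in> space M \<Longrightarrow> \<mu> (j a) \<omega> (B a) = s"
    and D: "prob_space (D s)" "sets (D s) = sets borel"
    and g[measurable]: "g \<in> borel_measurable borel"
  shows "(\<integral>\<^sup>+\<omega>. (\<Prod>a\<in>I. g (emeasure (X (j a) \<omega>) (B a))) \<partial>M) = (\<integral>\<^sup>+t. g t \<partial>D s) ^ card I"
proof -
  let ?P = "Pi\<^sub>M I (\<lambda>_. borel)" and ?\<Phi> = "\<lambda>\<omega>. \<lambda>a\<in>I. emeasure (X (j a) \<omega>) (B a)"
  interpret D: product_sigma_finite "\<lambda>_. D s"
    using D(1) unfolding product_sigma_finite_def by (simp add: prob_space_imp_sigma_finite)
  have distr: "distr M ?P ?\<Phi> = Pi\<^sub>M I (\<lambda>_. D s)"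
    by (rule distr_cond_indep_law_eq_PiM[OF law M F I B disj const D])
  have "(\<integral>\<^sup>+\<omega>. (\<Prod>a\<in>I. g (emeasure (X (j a) \<omega>) (B a))) \<partial>M) = (\<integral>\<^sup>+\<omega>. (\<Prod>a\<in>I. g (?\<Phi> \<omega> a)) \<partial>M)"
    by (intro nn_integral_cong prod.cong) auto
  also have "\<dots> = (\<integral>\<^sup>+x. (\<Prod>a\<in>I. g (x a)) \<partial>distr M ?P ?\<Phi>)"
    using I cond_indep_law_measurable[OF law B]
    by (intro nn_integral_distr[symmetric] measurable_restrict) auto
  also have "\<dots> = (\<Prod>a\<in>I. \<integral>\<^sup>+t. g t \<partial>D s)"
    unfolding distr using D(2)
    by (intro D.product_nn_integral_prod[OF I]) (simp cong: measurable_cong_sets)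
  finally show ?thesis
    by simp
qed

lemma (in prob_space) integral_prod_one_minus_indicator:
  fixes c p :: real
  assumes S: "finite S" and G: "\<And>m. m \<in> S \<Longrightarrow> G m \<in> events"
    and prob_INT: "\<And>U. U \<subseteq> S \<Longrightarrow> prob (space M \<inter> (\<Inter>m\<in>U. G m)) = p ^ card U"
  shows "(\<integral>\<omega>. (\<Prod>m\<in>S. 1 - c * indicator (G m) \<omega>) \<partial>M) = (1 - c * p) ^ card S"
proof -
  let ?G = "\<lambda>U. space M \<inter> (\<Inter>m\<in>U. G m)"
  have G_events: "?G U \<in> events" if "U \<subseteq> S" for U
  proof (cases "U = {}")
    case False
    with that G sets.sets_into_space have "(\<Inter>m\<in>U. G m) \<subseteq> space M"
      by blast
    with False that S G show ?thesis
      by (subst Int_absorb1) (auto intro!: sets.finite_INT dest: finite_subset)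
  qed simp
  have expand: "(\<Prod>m\<in>S. 1 - c * indicator (G m) \<omega>) = (\<Sum>U\<in>Pow S. (- c) ^ card U * indicator (?G U) \<omega>)"
    if "\<omega> \<in> space M" for \<omega>
  proof -
    have "(\<Prod>m\<in>S. 1 - c * indicator (G m) \<omega>) = (\<Prod>m\<in>S. - c * indicator (G m) \<omega> + 1)"
      by simp
    also have "\<dots> = (\<Sum>U\<in>Pow S. (\<Prod>m\<in>U. - c * indicator (G m) \<omega>) * (\<Prod>m\<in>S - U. 1))"
      by (rule prod_add[OF S])
    also have "\<dots> = (\<Sum>U\<in>Pow S. (- c) ^ card U * indicator (?G U) \<omega>)"
      using that by (intro sum.cong refl) (auto simp: prod.distrib indicator_def prod_zero_iff finite_subset[OF _ S])
    finally show ?thesis .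
  qed
  have "(\<integral>\<omega>. (\<Prod>m\<in>S. 1 - c * indicator (G m) \<omega>) \<partial>M)
      = (\<integral>\<omega>. (\<Sum>U\<in>Pow S. (- c) ^ card U * indicator (?G U) \<omega>) \<partial>M)"
    by (rule Bochner_Integration.integral_cong[OF refl expand])
  also have "\<dots> = (\<Sum>U\<in>Pow S. (\<integral>\<omega>. (- c) ^ card U * indicator (?G U) \<omega> \<partial>M))"
    using G_events by (intro Bochner_Integration.integral_sum integrable_mult_right integrable_real_indicator)
      (auto simp: less_top[symmetric])
  also have "\<dots> = (\<Sum>U\<in>Pow S. (- c) ^ card U * prob (?G U))"
    using G_events by (intro sum.cong refl) simp
  also have "\<dots> = (\<Sum>U\<in>Pow S. (\<Prod>m\<in>U. - c * p) * (\<Prod>m\<in>S - U. 1))"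
    using prob_INT by (intro sum.cong refl) (auto simp flip: power_mult_distrib)
  also have "\<dots> = (1 - c * p) ^ card S"
    using prod_add[OF S, of "\<lambda>_. - c * p" "\<lambda>_. 1"] by simp
  finally show ?thesis .
qed

lemma enn2real_power: "enn2real (a ^ n) = enn2real a ^ n"
  by (induction n) (simp_all add: enn2real_mult)

section \<open>Gamma and Poisson laws\<close>

lemma emeasure_gamma_law_top: "emeasure (gamma_law s) {\<top>} = (if s = \<top> then 1 else 0)"
proof -
  have "ennreal -` {\<top>} = {}" by auto
  then show ?thesis
    unfolding gamma_law_def by (simp add: emeasure_distr)
qed

lemma emeasure_poisson_law_top: "emeasure (poisson_law m) {\<top>} = (if m = \<top> then 1 else 0)"
proof -
  have "of_nat -` {\<top>::ennreal} = {}" by auto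
  then show ?thesis
    unfolding poisson_law_def by (simp add: emeasure_distr)
qed

lemma emeasure_poisson_law_zero:
  "emeasure (poisson_law m) {0} = (if m = \<top> then 0 else ennreal (exp (- enn2real m)))"
proof (cases "m = 0 \<or> m = \<top>")
  case True
  then show ?thesis unfolding poisson_law_def by auto
next
  case False
  then have "0 < enn2real m"
    by (simp add: enn2real_positive_iff less_top order_le_neq_trans[OF zero_le])
  moreover have "of_nat -` {0::ennreal} = {0::nat}" by auto
  ultimately show ?thesis
    using False unfolding poisson_law_def by (simp add: emeasure_distr emeasure_pmf_single)
qed

lemma emeasure_poisson_law_zero_le:
  assumes "1 \<le> m" shows "emeasure (poisson_law m) {0} \<le> ennreal (exp (- 1))"
proof (cases "m = \<top>")
  case False
  with assms have "1 \<le> enn2real m"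
    using enn2real_mono[of 1 m] by (simp add: less_top)
  with False show ?thesis by (simp add: emeasure_poisson_law_zero)
qed (simp add: emeasure_poisson_law_zero)

lemma emeasure_poisson_law_not_nat: "emeasure (poisson_law m) (- (range of_nat \<union> {\<top>})) = 0"
proof -
  have "of_nat -` (- (range of_nat \<union> {\<top>::ennreal})) = {}" by auto
  moreover have "countable (range of_nat \<union> {\<top>::ennreal})"
    by simp
  then have "range of_nat \<union> {\<top>::ennreal} \<in> sets borel"
    by (rule sets.countable[rotated]) simp
  then have "- (range of_nat \<union> {\<top>::ennreal}) \<in> sets borel"
    by (metis Compl_eq_Diff_UNIV sets.compl_sets space_borel)
  ultimately show ?thesis
    unfolding poisson_law_def by (auto simp: emeasure_distr indicator_def intro: range_eqI[of 0 _ 0])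
qed

lemma nn_integral_lborel_pos:
  assumes f: "f \<in> borel_measurable lborel" and "(a::real) < b"
    and pos: "\<And>x. a < x \<Longrightarrow> x < b \<Longrightarrow> 0 < f x"
  shows "0 < integral\<^sup>N lborel f"
proof (rule ccontr)
  assume "\<not> 0 < integral\<^sup>N lborel f"
  then have "AE x in lborel. f x = 0"
    using nn_integral_0_iff_AE[OF f] by (simp add: not_less)
  then have "AE x in lborel. x \<notin> {a<..<b}"
    by (rule AE_mp) (auto intro!: AE_I2 dest: pos)
  then have "emeasure lborel {a<..<b} = 0"
    by (subst (asm) AE_iff_measurable[of "{a<..<b}"]) auto
  with \<open>a < b\<close> show False by simp
qed

lemma borel_measurable_Gamma[measurable]: "(Gamma :: real \<Rightarrow> real) \<in> borel_measurable borel"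
proof -
  have "(\<lambda>x::real. if x \<in> - \<int>\<^sub>\<le>\<^sub>0 then Gamma x else 0) \<in> borel_measurable borel"
    by (intro borel_measurable_continuous_on_if borel_open)
       (auto simp: open_Compl intro!: continuous_on_Gamma continuous_intros)
  moreover have "(\<lambda>x::real. if x \<in> - \<int>\<^sub>\<le>\<^sub>0 then Gamma x else 0) = Gamma"
    by (auto simp: fun_eq_iff Gamma_nonpos_Int)
  ultimately show ?thesis by simp
qed

lemma borel_measurable_gamma_pdf[measurable]:
  "(\<lambda>(a, x). gamma_pdf a x) \<in> borel_measurable (borel \<Otimes>\<^sub>M borel)"
  unfolding gamma_pdf_def by measurable

definition gamma_tail :: "ennreal \<Rightarrow> ennreal" where
  "gamma_tail s = emeasure (gamma_law s) {1<..}"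

lemma gamma_tail_eq:
  "gamma_tail s = (if s = 0 then 0 else if s = \<top> then 1
     else \<integral>\<^sup>+x. ennreal (gamma_pdf (enn2real s) x) * indicator {1<..} x \<partial>lborel)"
proof -
  have "ennreal -` {1<..} = {1<..}" by auto
  then have "s \<noteq> 0 \<Longrightarrow> s \<noteq> \<top> \<Longrightarrow> emeasure (distr (density lborel (\<lambda>x. ennreal (gamma_pdf (enn2real s) x))) borel ennreal) {1<..}
      = (\<integral>\<^sup>+x. ennreal (gamma_pdf (enn2real s) x) * indicator {1<..} x \<partial>lborel)"
    by (subst emeasure_distr) (auto simp: emeasure_density)
  then show ?thesis
    unfolding gamma_tail_def gamma_law_def by auto
qed

lemma borel_measurable_gamma_tail[measurable]: "gamma_tail \<in> borel_measurable borel"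
proof -
  have "(\<lambda>a. \<integral>\<^sup>+x. ennreal (gamma_pdf a x) * indicator {1<..} x \<partial>lborel) \<in> borel_measurable borel"
    by (rule lborel.borel_measurable_nn_integral[where f="\<lambda>a x. ennreal (gamma_pdf a x) * indicator {1<..} x", simplified])
       measurable
  then show ?thesis
    unfolding gamma_tail_eq[abs_def] by measurable
qed

lemma gamma_law_1: "gamma_law 1 = distr (density lborel (exponential_density 1)) borel ennreal"
proof -
  have "density lborel (\<lambda>x. ennreal (gamma_pdf 1 x)) = density lborel (exponential_density 1)"
  proof (rule density_cong)
    show "AE x in lborel. ennreal (gamma_pdf 1 x) = ennreal (exponential_density 1 x)"
      using AE_lborel_singleton[of 0]
      by (rule AE_mp) (auto intro!: AE_I2 simp: gamma_pdf_def exponential_density_def)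
  qed (auto simp: gamma_pdf_def exponential_density_def)
  then show ?thesis
    unfolding gamma_law_def by simp
qed

lemma prob_space_gamma_law_1: "prob_space (gamma_law 1)"
  unfolding gamma_law_1 by (intro prob_space.prob_space_distr prob_space_exponential_density) simp_all

lemma sets_gamma_law_1[measurable_cong]: "sets (gamma_law 1) = sets borel"
  unfolding gamma_law_1 by simp

lemma nn_integral_gamma_tail_pos: "0 < (\<integral>\<^sup>+s. gamma_tail s \<partial>gamma_law 1)"
proof -
  have "(\<integral>\<^sup>+s. gamma_tail s \<partial>gamma_law 1)
      = (\<integral>\<^sup>+x. exponential_density 1 x * gamma_tail (ennreal x) \<partial>lborel)"
    unfolding gamma_law_1 by (simp add: nn_integral_distr nn_integral_density)
  also have "0 < \<dots>"
  proof (rule nn_integral_lborel_pos[of _ 0 1])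
    fix x :: real assume x: "0 < x" "x < 1"
    have "0 < (\<integral>\<^sup>+y. ennreal (gamma_pdf x y) * indicator {1<..} y \<partial>lborel)"
      by (rule nn_integral_lborel_pos[of _ 1 2]) (use x in \<open>auto simp: gamma_pdf_def\<close>)
    with x show "0 < exponential_density 1 x * gamma_tail (ennreal x)"
      by (simp add: gamma_tail_eq exponential_density_def ennreal_zero_less_mult_iff)
  qed auto
  finally show ?thesis .
qed

section \<open>Atoms of integer-valued measures\<close>

definition dyadic_index :: "nat \<Rightarrow> ('k::finite \<Rightarrow> real^'d::finite) \<Rightarrow> 'k \<Rightarrow> 'd \<Rightarrow> int" where
  "dyadic_index j x = (\<lambda>k i. \<lfloor>2^j * x k $ i\<rfloor>)"

definition dyadic_cell :: "nat \<Rightarrow> ('k \<Rightarrow> 'd \<Rightarrow> int) \<Rightarrow> ('k::finite \<Rightarrow> real^'d::finite) set" where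
  "dyadic_cell j z = {x. dyadic_index j x = z}"

lemma floor_eq_floor_double_div_2: "\<lfloor>a::real\<rfloor> = \<lfloor>2 * a\<rfloor> div 2"
  using floor_divide_real_eq_div[of 2 "2 * a"] by simp

lemma dyadic_index_eq_Suc:
  "dyadic_index (Suc j) x = dyadic_index (Suc j) y \<Longrightarrow> dyadic_index j x = dyadic_index j y"
  unfolding dyadic_index_def fun_eq_iff
  by (metis floor_eq_floor_double_div_2 mult.assoc power_Suc)

lemma dyadic_index_inject:
  assumes "\<And>j. dyadic_index j x = dyadic_index j y" shows "x = y"
proof (intro ext vec_eq_iff[THEN iffD2] allI)
  fix k i
  have close: "\<bar>x k $ i - y k $ i\<bar> * 2^j < 1" for j :: nat
  proof -
    have "\<lfloor>2^j * x k $ i\<rfloor> = \<lfloor>2^j * y k $ i\<rfloor>"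
      using assms[of j] unfolding dyadic_index_def fun_eq_iff by blast
    then have "\<bar>2^j * x k $ i - 2^j * y k $ i\<bar> < 1" by linarith
    then show ?thesis by (simp add: abs_mult flip: right_diff_distrib mult.commute[of "2^j"])
  qed
  show "x k $ i = y k $ i"
  proof (rule ccontr)
    assume "x k $ i \<noteq> y k $ i"
    then obtain j :: nat where "1 / \<bar>x k $ i - y k $ i\<bar> < 2^j" "0 < \<bar>x k $ i - y k $ i\<bar>"
      using real_arch_pow[of 2 "1 / \<bar>x k $ i - y k $ i\<bar>"] by auto
    with close[of j] show False by (simp add: field_simps)
  qed
qed

lemma INT_dyadic_cell: "(\<Inter>j. dyadic_cell j (dyadic_index j x)) = {x}"
  using dyadic_index_inject by (auto simp: dyadic_cell_def)

lemma dyadic_cell_Suc_subset: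
  assumes "dyadic_cell (Suc j) z' \<inter> dyadic_cell j z \<noteq> {}"
  shows "dyadic_cell (Suc j) z' \<subseteq> dyadic_cell j z"
  using assms dyadic_index_eq_Suc by (fastforce simp: dyadic_cell_def)

lemma sets_dyadic_cell: "dyadic_cell j z \<in> sets tuple_space"
proof -
  have "dyadic_cell j z = Pi\<^sub>E UNIV (\<lambda>k. {v. \<forall>i. \<lfloor>2^j * v $ i\<rfloor> = z k i})"
    by (auto simp: dyadic_cell_def dyadic_index_def PiE_UNIV_domain fun_eq_iff)
  also have "\<dots> \<in> sets tuple_space"
    unfolding tuple_space_def by (rule sets_PiM_I_finite) auto
  finally show ?thesis .
qed

lemma ex_dyadic_cell_emeasure_ne_0:
  assumes S: "sets \<nu> = sets tuple_space" and Y: "Y \<in> sets \<nu>" and nz: "emeasure \<nu> Y \<noteq> 0"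
  shows "\<exists>z. emeasure \<nu> (Y \<inter> dyadic_cell j z) \<noteq> 0"
proof (rule ccontr)
  assume "\<not> ?thesis"
  then have "(\<Union>z. Y \<inter> dyadic_cell j z) \<in> null_sets \<nu>"
    using Y S by (intro null_sets_UN') (auto simp: null_sets_def intro!: sets.Int sets_dyadic_cell)
  moreover have "(\<Union>z. Y \<inter> dyadic_cell j z) = Y"
    by (auto simp: dyadic_cell_def)
  ultimately show False
    using nz by (metis null_setsD1)
qed

lemma sets_singleton_tuple_space: "{x} \<in> sets tuple_space"
proof -
  have "{x} = Pi\<^sub>E UNIV (\<lambda>k. {x k})"
    by (auto simp: PiE_UNIV_domain)
  then show ?thesis
    unfolding tuple_space_def by (simp add: sets_PiM_I_finite)
qed

definition nat_valued_on_cells :: "('k::finite \<Rightarrow> real^'d::finite) measure \<Rightarrow> ('k \<Rightarrow> real^'d) set \<Rightarrow> bool" where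
  "nat_valued_on_cells \<nu> A \<longleftrightarrow> (\<forall>j z. emeasure \<nu> (A \<inter> dyadic_cell j z) \<in> range of_nat)"

lemma one_le_of_nat_ennreal: "e \<in> range (of_nat :: nat \<Rightarrow> ennreal) \<Longrightarrow> e \<noteq> 0 \<Longrightarrow> 1 \<le> e"
proof -
  assume "e \<in> range of_nat" "e \<noteq> 0"
  then obtain n where "e = of_nat n" "1 \<le> n" by auto
  then show ?thesis using of_nat_mono[of 1 n] by simp
qed

lemma one_le_emeasure_INT_dyadic_cells:
  assumes S: "sets \<nu> = sets tuple_space" and A: "A \<in> sets tuple_space"
    and fin: "emeasure \<nu> A \<noteq> \<top>" and nat: "nat_valued_on_cells \<nu> A"
    and nested: "\<And>j. dyadic_cell (Suc j) (z (Suc j)) \<subseteq> dyadic_cell j (z j)"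
    and nonnull: "\<And>j. emeasure \<nu> (A \<inter> dyadic_cell j (z j)) \<noteq> 0"
  shows "1 \<le> emeasure \<nu> (\<Inter>j. A \<inter> dyadic_cell j (z j))"
proof -
  let ?C = "\<lambda>j. A \<inter> dyadic_cell j (z j)"
  have C: "?C j \<in> sets \<nu>" for j
    using sets.Int[OF A sets_dyadic_cell] by (simp add: S)
  have "emeasure \<nu> (?C 0) \<le> emeasure \<nu> A"
    using A S by (intro emeasure_mono) auto
  then have "emeasure \<nu> (?C 0) \<noteq> \<top>"
    using fin by (auto simp: top_unique)
  moreover have "decseq ?C"
    using nested by (auto simp: decseq_Suc_iff)
  ultimately have "(INF j. emeasure \<nu> (?C j)) = emeasure \<nu> (\<Inter>j. ?C j)"
    by (intro INF_emeasure_decseq'[OF C]) auto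
  moreover have "1 \<le> (INF j. emeasure \<nu> (?C j))"
    using nat nonnull by (intro INF_greatest one_le_of_nat_ennreal) (auto simp: nat_valued_on_cells_def)
  ultimately show ?thesis
    by simp
qed

lemma one_le_emeasure_atom:
  assumes S: "sets \<nu> = sets tuple_space" and A: "A \<in> sets tuple_space"
    and fin: "emeasure \<nu> A \<noteq> \<top>" and nat: "nat_valued_on_cells \<nu> A"
    and x: "x \<in> A" and atom: "emeasure \<nu> {x} \<noteq> 0"
  shows "1 \<le> emeasure \<nu> {x}"
proof -
  have INT: "(\<Inter>j. A \<inter> dyadic_cell j (dyadic_index j x)) = {x}"
    using INT_dyadic_cell[of x] x by auto
  have "1 \<le> emeasure \<nu> (\<Inter>j. A \<inter> dyadic_cell j (dyadic_index j x))"
  proof (rule one_le_emeasure_INT_dyadic_cells[OF S A fin nat])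
    show "dyadic_cell (Suc j) (dyadic_index (Suc j) x) \<subseteq> dyadic_cell j (dyadic_index j x)" for j
      by (rule dyadic_cell_Suc_subset) (auto simp: dyadic_cell_def)
    have "emeasure \<nu> {x} \<le> emeasure \<nu> (A \<inter> dyadic_cell j (dyadic_index j x))" for j
      using x sets.Int[OF A sets_dyadic_cell] by (intro emeasure_mono) (auto simp: S dyadic_cell_def)
    then show "emeasure \<nu> (A \<inter> dyadic_cell j (dyadic_index j x)) \<noteq> 0" for j
      using atom by (metis le_zero_eq)
  qed
  with INT show ?thesis by simp
qed

lemma finite_atoms:
  assumes S: "sets \<nu> = sets tuple_space" and A: "A \<in> sets tuple_space"
    and fin: "emeasure \<nu> A \<noteq> \<top>" and nat: "nat_valued_on_cells \<nu> A"
  shows "finite {x\<in>A. 0 < emeasure \<nu> {x}}"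
proof (rule ccontr)
  assume "infinite {x\<in>A. 0 < emeasure \<nu> {x}}"
  moreover obtain n :: nat where n: "emeasure \<nu> A < of_nat n"
    using fin by (metis ennreal_Ex_less_of_nat less_top)
  ultimately obtain F where F: "finite F" "card F = n" "F \<subseteq> {x\<in>A. 0 < emeasure \<nu> {x}}"
    using infinite_arbitrarily_large by blast
  have "of_nat n = (\<Sum>x\<in>F. (1::ennreal))"
    using F by simp
  also have "\<dots> \<le> (\<Sum>x\<in>F. emeasure \<nu> {x})"
    using F(3) by (intro sum_mono one_le_emeasure_atom[OF S A fin nat]) auto
  also have "\<dots> = emeasure \<nu> F"
    using F S by (intro emeasure_eq_sum_singleton[symmetric]) (auto simp: sets_singleton_tuple_space)
  also have "\<dots> \<le> emeasure \<nu> A"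
    using F S A by (intro emeasure_mono) auto
  finally show False
    using n by simp
qed

lemma ex_atom:
  assumes S: "sets \<nu> = sets tuple_space" and A: "A \<in> sets tuple_space"
    and fin: "emeasure \<nu> A \<noteq> \<top>" and nat: "nat_valued_on_cells \<nu> A" and nonnull: "emeasure \<nu> A \<noteq> 0"
  shows "\<exists>x\<in>A. 0 < emeasure \<nu> {x}"
proof -
  have A': "A \<in> sets \<nu>" using A S by simp
  have "\<exists>z. \<forall>j. emeasure \<nu> (A \<inter> dyadic_cell j (z j)) \<noteq> 0 \<and> dyadic_cell (Suc j) (z (Suc j)) \<subseteq> dyadic_cell j (z j)"
  proof (rule dependent_nat_choice)
    show "\<exists>z. emeasure \<nu> (A \<inter> dyadic_cell 0 z) \<noteq> 0"
      by (rule ex_dyadic_cell_emeasure_ne_0[OF S A' nonnull])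
  next
    fix j z assume "emeasure \<nu> (A \<inter> dyadic_cell j z) \<noteq> 0"
    then obtain z' where z': "emeasure \<nu> (A \<inter> dyadic_cell j z \<inter> dyadic_cell (Suc j) z') \<noteq> 0"
      using ex_dyadic_cell_emeasure_ne_0[OF S] A' sets_dyadic_cell S by (metis sets.Int)
    then have "A \<inter> dyadic_cell j z \<inter> dyadic_cell (Suc j) z' \<noteq> {}"
      by auto
    then have sub: "dyadic_cell (Suc j) z' \<subseteq> dyadic_cell j z"
      by (intro dyadic_cell_Suc_subset) blast
    then have "emeasure \<nu> (A \<inter> dyadic_cell (Suc j) z') \<noteq> 0"
      using z' by (simp add: Int_absorb2 Int_assoc Int_commute[of "dyadic_cell j z"])
    with sub show "\<exists>z'. emeasure \<nu> (A \<inter> dyadic_cell (Suc j) z') \<noteq> 0 \<and> dyadic_cell (Suc j) z' \<subseteq> dyadic_cell j z"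
      by blast
  qed
  then obtain z where nonnull_z: "\<And>j. emeasure \<nu> (A \<inter> dyadic_cell j (z j)) \<noteq> 0"
    and nested: "\<And>j. dyadic_cell (Suc j) (z (Suc j)) \<subseteq> dyadic_cell j (z j)"
    by blast
  have one: "1 \<le> emeasure \<nu> (\<Inter>j. A \<inter> dyadic_cell j (z j))"
    by (rule one_le_emeasure_INT_dyadic_cells[OF S A fin nat nested nonnull_z])
  then obtain x where x: "x \<in> (\<Inter>j. A \<inter> dyadic_cell j (z j))"
    by (metis INT_I emeasure_empty equals0I not_one_le_zero)
  then have "(\<Inter>j. A \<inter> dyadic_cell j (z j)) = {x}"
    using INT_dyadic_cell[of x] by (auto simp: dyadic_cell_def)
  with one have "1 \<le> emeasure \<nu> {x}"
    by simp
  moreover from x have "x \<in> A"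
    by blast
  ultimately show ?thesis
    by (auto intro!: bexI[of _ x] less_le_trans[OF zero_less_one])
qed

section \<open>Unit cubes in the orthant\<close>

definition cube :: "nat \<Rightarrow> (real^'d::finite) set" where
  "cube m = {x. \<forall>i. 2 * real m \<le> x $ i \<and> x $ i \<le> 2 * real m + 1}"

definition tuple_cube :: "nat \<Rightarrow> ('k::finite \<Rightarrow> real^'d::finite) set" where
  "tuple_cube m = Pi\<^sub>E UNIV (\<lambda>_. cube m)"

lemma cube_eq_cbox: "cube m = cbox (\<chi> _. 2 * real m) (\<chi> _. 2 * real m + 1)"
  by (auto simp: cube_def mem_box_cart)

lemma sets_cube[measurable]: "cube m \<in> sets borel"
  by (simp add: cube_eq_cbox)

lemma bounded_cube: "bounded (cube m)"
  by (simp add: cube_eq_cbox)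

lemma disjoint_cube:
  assumes "m \<noteq> m'" shows "cube m \<inter> cube m' = {}"
proof (rule equals0I)
  fix x assume "x \<in> cube m \<inter> cube m'"
  then have "real (2 * m) \<le> real (2 * m' + 1)" "real (2 * m') \<le> real (2 * m + 1)"
    unfolding cube_def by (auto dest!: spec[of _ undefined])
  then have "2 * m \<le> 2 * m' + 1" "2 * m' \<le> 2 * m + 1"
    by (simp_all only: of_nat_le_iff)
  with assms show False
    by linarith
qed

lemma disjoint_tuple_cube: "m \<noteq> m' \<Longrightarrow> tuple_cube m \<inter> tuple_cube m' = {}"
  using disjoint_cube by (fastforce simp: tuple_cube_def)

lemma tuple_cube_subset_box: "tuple_cube m \<subseteq> box (2 * real m + 1)"
  by (force simp: tuple_cube_def cube_def box_def PiE_iff intro: order_trans[of 0 "2 * real m"])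

lemma box_eq_PiE_cbox: "box \<alpha> = Pi\<^sub>E UNIV (\<lambda>_. cbox 0 (\<chi> _. \<alpha>))"
  by (auto simp: box_def PiE_UNIV_domain Pi_iff mem_box_cart)

lemma points_T_mono: "\<alpha> \<le> \<beta> \<Longrightarrow> points_T \<alpha> \<nu> \<subseteq> points_T \<beta> \<nu>"
  by (auto simp: points_T_def box_def intro: order_trans)

lemma sets_PiE_tuple_space: "(\<And>k. A k \<in> sets borel) \<Longrightarrow> Pi\<^sub>E UNIV A \<in> sets tuple_space"
  unfolding tuple_space_def by (rule sets_PiM_I_finite) auto

lemma sets_tuple_cube[measurable]: "tuple_cube m \<in> sets tuple_space"
  unfolding tuple_cube_def by (rule sets_PiE_tuple_space) simp

lemma emeasure_orthant_lebesgue: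
  "A \<in> sets borel \<Longrightarrow> emeasure orthant_lebesgue A = emeasure lborel (A \<inter> {x. \<forall>i. 0 \<le> x $ i})"
  unfolding orthant_lebesgue_def
  by (subst emeasure_density) (auto simp: Int_commute nn_integral_indicator[symmetric] indicator_inter_arith
      mult.commute intro!: nn_integral_cong)

lemma emeasure_orthant_lebesgue_cube: "emeasure orthant_lebesgue (cube m :: (real^'d::finite) set) = 1"
proof -
  have "cube m \<inter> {x. \<forall>i. 0 \<le> x $ i} = (cube m :: (real^'d) set)"
    by (force simp: cube_def intro: order_trans[of 0 "2 * real m"])
  moreover have "(\<chi> _. c) \<bullet> b = c" if "b \<in> Basis" for c :: real and b :: "real^'d"
    using that by (auto simp: Basis_vec_def inner_vec_def axis_def if_distrib sum.delta cong: if_cong)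
  ultimately show ?thesis
    by (simp add: emeasure_orthant_lebesgue cube_eq_cbox emeasure_lborel_cbox_eq inner_diff_left)
qed

lemma emeasure_orthant_lebesgue_bounded:
  "A \<in> sets borel \<Longrightarrow> bounded A \<Longrightarrow> emeasure orthant_lebesgue A \<noteq> \<top>"
  using emeasure_bounded_finite[of "A \<inter> {x. \<forall>i. 0 \<le> x $ i}"]
  by (simp add: emeasure_orthant_lebesgue bounded_Int)

lemma T_mean_PiE:
  assumes "\<And>k r. sigma_finite_measure (W k r)" "\<And>k r. sets (W k r) = sets borel"
    and "\<And>k. A k \<in> sets borel"
  shows "T_mean W (Pi\<^sub>E UNIV A) = (\<Sum>r\<in>UNIV. \<Prod>k\<in>UNIV. emeasure (W k r) (A k))"
  unfolding T_mean_def
proof (rule sum.cong[OF refl])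
  fix r
  interpret product_sigma_finite "\<lambda>k. W k r"
    using assms(1) by (simp add: product_sigma_finite_def)
  show "emeasure (Pi\<^sub>M UNIV (\<lambda>k. W k r)) (Pi\<^sub>E UNIV A) = (\<Prod>k\<in>UNIV. emeasure (W k r) (A k))"
    using assms(2,3) by (intro emeasure_PiM) auto
qed

lemma finite_points_T:
  assumes "\<And>n::nat. finite (points_T (real n) \<nu>)"
  shows "finite (points_T \<alpha> \<nu>)"
  using assms[of "nat \<lceil>\<alpha>\<rceil>"] points_T_mono[of \<alpha> "real (nat \<lceil>\<alpha>\<rceil>)" \<nu>]
  by (meson finite_subset of_nat_ceiling)

lemma filterlim_card_points_T:
  assumes fin: "\<And>n::nat. finite (points_T (real n) \<nu>)"
    and atoms: "infinite {m. \<exists>x\<in>tuple_cube m. 0 < emeasure \<nu> {x}}"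
  shows "filterlim (\<lambda>\<alpha>. card (points_T \<alpha> \<nu>)) at_top at_top"
  unfolding filterlim_at_top
proof
  fix n :: nat
  let ?A = "{m. \<exists>x\<in>tuple_cube m. 0 < emeasure \<nu> {x}}"
  have "\<forall>m\<in>?A. \<exists>x. x \<in> tuple_cube m \<and> 0 < emeasure \<nu> {x}"
    by auto
  then obtain a where a: "\<forall>m\<in>?A. a m \<in> tuple_cube m \<and> 0 < emeasure \<nu> {a m}"
    by (rule bchoice[THEN exE])
  obtain F where F: "finite F" "card F = n" "F \<subseteq> ?A"
    using infinite_arbitrarily_large[OF atoms] by blast
  have "inj_on a F"
  proof (rule inj_onI)
    fix m m' assume "m \<in> F" "m' \<in> F" "a m = a m'"
    have "a m \<in> tuple_cube m" "a m' \<in> tuple_cube m'"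
      using bspec[OF a subsetD[OF F(3) \<open>m \<in> F\<close>]] bspec[OF a subsetD[OF F(3) \<open>m' \<in> F\<close>]] by simp_all
    with \<open>a m = a m'\<close> have "a m \<in> tuple_cube m \<inter> tuple_cube m'"
      by simp
    then show "m = m'"
      using disjoint_tuple_cube by (metis empty_iff)
  qed
  then have card_aF: "card (a ` F) = n"
    using F by (simp add: card_image)
  have "\<forall>\<^sub>F \<alpha> in at_top. \<forall>m\<in>F. a m \<in> points_T \<alpha> \<nu>"
  proof (intro eventually_ball_finite[OF F(1)] ballI)
    fix m assume "m \<in> F"
    then have "a m \<in> tuple_cube m \<and> 0 < emeasure \<nu> {a m}"
      using bspec[OF a subsetD[OF F(3)]] by blast
    then have "a m \<in> points_T (2 * real m + 1) \<nu>"
      using tuple_cube_subset_box by (auto simp: points_T_def)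
    then have "a m \<in> points_T \<alpha> \<nu>" if "2 * real m + 1 \<le> \<alpha>" for \<alpha>
      using points_T_mono[OF that] by blast
    then show "\<forall>\<^sub>F \<alpha> in at_top. a m \<in> points_T \<alpha> \<nu>"
      by (auto intro: eventually_mono[OF eventually_ge_at_top[of "2 * real m + 1"]])
  qed
  then show "\<forall>\<^sub>F \<alpha> in at_top. n \<le> card (points_T \<alpha> \<nu>)"
  proof eventually_elim
    case (elim \<alpha>)
    then have "a ` F \<subseteq> points_T \<alpha> \<nu>"
      by blast
    with card_aF show ?case
      using card_mono[OF finite_points_T[OF fin]] by metis
  qed
qed

section \<open>The coupled construction\<close>

locale coupled_process =
  fixes M :: "'w measure"
    and L :: "'k::finite \<Rightarrow> 'w \<Rightarrow> (real^'d::finite) measure"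
    and W :: "'k \<Rightarrow> 'r::finite \<Rightarrow> 'w \<Rightarrow> (real^'d) measure"
    and T :: "'w \<Rightarrow> ('k \<Rightarrow> real^'d) measure"
  assumes coupled: "coupled_construction M L W T"
begin

sublocale prob_space M
  using coupled unfolding coupled_construction_def by blast

lemma law_L: "cond_indep_law M {space M} borel L (\<lambda>k \<omega> B. emeasure orthant_lebesgue B) gamma_law"
  using coupled unfolding coupled_construction_def by blast

lemma law_W: "cond_indep_law M (rm_events M (range L)) borel (\<lambda>(k, r). W k r)
    (\<lambda>(k, r) \<omega> B. emeasure (L k \<omega>) B) gamma_law"
  using coupled unfolding coupled_construction_def by blast

lemma law_T: "cond_indep_law M (rm_events M (range L \<union> range (\<lambda>(k, r). W k r))) tuple_space
    (\<lambda>_::unit. T) (\<lambda>_ \<omega> B. T_mean (\<lambda>k r. W k r \<omega>) B) poisson_law"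
  using coupled unfolding coupled_construction_def by blast

lemma sets_W: "\<omega> \<in> space M \<Longrightarrow> sets (W k r \<omega>) = sets borel"
  using cond_indep_law_sets[OF law_W, of \<omega> "(k, r)"] by simp

lemma sets_T: "\<omega> \<in> space M \<Longrightarrow> sets (T \<omega>) = sets tuple_space"
  using cond_indep_law_sets[OF law_T] by blast

lemma measurable_W[measurable]: "B \<in> sets borel \<Longrightarrow> (\<lambda>\<omega>. emeasure (W k r \<omega>) B) \<in> borel_measurable M"
  using cond_indep_law_measurable[OF law_W, of B "(k, r)"] by simp

lemma measurable_T[measurable]: "B \<in> sets tuple_space \<Longrightarrow> (\<lambda>\<omega>. emeasure (T \<omega>) B) \<in> borel_measurable M"
  using cond_indep_law_measurable[OF law_T] by blast

lemma AE_L_finite: "B \<in> sets borel \<Longrightarrow> bounded B \<Longrightarrow> AE \<omega> in M. emeasure (L k \<omega>) B \<noteq> \<top>"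
  using AE_cond_indep_law_notin[OF law_L, of B "{\<top>}" k]
  by (simp add: emeasure_gamma_law_top emeasure_orthant_lebesgue_bounded)

lemma AE_W_finite: "B \<in> sets borel \<Longrightarrow> bounded B \<Longrightarrow> AE \<omega> in M. emeasure (W k r \<omega>) B \<noteq> \<top>"
  using AE_cond_indep_law_notin[OF law_W space_in_rm_events, of B "{\<top>}" "(k, r)"] AE_L_finite[of B k]
  by (simp add: emeasure_gamma_law_top)

lemma AE_sigma_finite_W: "AE \<omega> in M. \<forall>k r. sigma_finite_measure (W k r \<omega>)"
proof -
  have "AE \<omega> in M. \<forall>k r n. emeasure (W k r \<omega>) (cball 0 (real n)) \<noteq> \<top>"
    by (simp add: AE_all_countable AE_W_finite)
  then show ?thesis
  proof (rule AE_mp, intro AE_I2 impI allI)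
    fix \<omega> k r assume \<omega>: "\<omega> \<in> space M" and fin: "\<forall>k r n. emeasure (W k r \<omega>) (cball 0 (real n)) \<noteq> \<top>"
    have "(\<Union>n. cball 0 (real n)) = (UNIV :: (real^'d) set)"
      by (force simp: real_arch_simple)
    with fin show "sigma_finite_measure (W k r \<omega>)"
      by unfold_locales
        (auto intro!: exI[of _ "range (\<lambda>n. cball 0 (real n))"] simp: sets_W[OF \<omega>] sets_eq_imp_space_eq[OF sets_W[OF \<omega>]])
  qed
qed

lemma AE_T_PiE_finite:
  assumes "A \<in> sets borel" "bounded A"
  shows "AE \<omega> in M. emeasure (T \<omega>) (Pi\<^sub>E UNIV (\<lambda>_. A)) \<noteq> \<top>"
proof -
  have "AE \<omega> in M. \<forall>k r. emeasure (W k r \<omega>) A \<noteq> \<top>"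
    using assms by (simp add: AE_all_countable AE_W_finite)
  with AE_sigma_finite_W AE_space
  have "AE \<omega> in M. T_mean (\<lambda>k r. W k r \<omega>) (Pi\<^sub>E UNIV (\<lambda>_. A)) \<noteq> \<top>"
  proof eventually_elim
    case (elim \<omega>)
    then show ?case
      using assms by (simp add: T_mean_PiE sets_W ennreal_prod_eq_top)
  qed
  then show ?thesis
    using AE_cond_indep_law_notin[OF law_T space_in_rm_events, of "Pi\<^sub>E UNIV (\<lambda>_. A)" "{\<top>}"] assms
    by (simp add: emeasure_poisson_law_top sets_PiE_tuple_space)
qed

lemma AE_T_nat: "B \<in> sets tuple_space \<Longrightarrow> AE \<omega> in M. emeasure (T \<omega>) B \<in> range of_nat \<union> {\<top>}"
proof -
  assume B: "B \<in> sets tuple_space"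
  have "countable (range of_nat \<union> {\<top>::ennreal})"
    by simp
  then have "range of_nat \<union> {\<top>::ennreal} \<in> sets borel"
    by (rule sets.countable[rotated]) simp
  then have "- (range of_nat \<union> {\<top>::ennreal}) \<in> sets borel"
    by (metis Compl_eq_Diff_UNIV sets.compl_sets space_borel)
  then have "AE \<omega> in M. emeasure (T \<omega>) B \<notin> - (range of_nat \<union> {\<top>})"
    by (intro AE_cond_indep_law_notin[OF law_T space_in_rm_events B] AE_I2 emeasure_poisson_law_not_nat)
  then show ?thesis
    by simp
qed

lemma AE_nat_valued_on_cells:
  assumes A: "A \<in> sets tuple_space" and fin: "AE \<omega> in M. emeasure (T \<omega>) A \<noteq> \<top>"
  shows "AE \<omega> in M. nat_valued_on_cells (T \<omega>) A"
proof -
  have "AE \<omega> in M. \<forall>j z. emeasure (T \<omega>) (A \<inter> dyadic_cell j z) \<in> range of_nat \<union> {\<top>}"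
    by (simp only: AE_all_countable) (intro allI AE_T_nat sets.Int[OF A sets_dyadic_cell])
  with fin AE_space show ?thesis
  proof eventually_elim
    case (elim \<omega>)
    have "emeasure (T \<omega>) (A \<inter> dyadic_cell j z) \<le> emeasure (T \<omega>) A" for j z
      using A elim by (intro emeasure_mono) (auto simp: sets_T)
    with elim show ?case
      unfolding nat_valued_on_cells_def by (metis Un_insert_right insertE sup_bot.right_neutral top_unique)
  qed
qed

lemma AE_finite_points_T: "AE \<omega> in M. finite (points_T \<alpha> (T \<omega>))"
proof -
  have box: "box \<alpha> \<in> sets tuple_space" "AE \<omega> in M. emeasure (T \<omega>) (box \<alpha>) \<noteq> \<top>"
    unfolding box_eq_PiE_cbox by (auto intro!: sets_PiE_tuple_space AE_T_PiE_finite)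
  from AE_nat_valued_on_cells[OF box] box(2) AE_space show ?thesis
  proof eventually_elim
    case (elim \<omega>)
    then show ?case
      using finite_atoms[OF sets_T box(1)] by (simp add: points_T_def)
  qed
qed

lemma nn_integral_prod_L_cube:
  assumes "finite I" "g \<in> borel_measurable borel"
  shows "(\<integral>\<^sup>+\<omega>. (\<Prod>a\<in>I. g (emeasure (L (fst a) \<omega>) (cube (snd a)))) \<partial>M) = (\<integral>\<^sup>+s. g s \<partial>gamma_law 1) ^ card I"
  using assms disjoint_cube prob_space_axioms
  by (intro nn_integral_prod_cond_indep_law[OF law_L _ _ _ _ _ _ prob_space_gamma_law_1 sets_gamma_law_1])
     (auto simp: emeasure_orthant_lebesgue_cube prod_eq_iff)

definition heavy :: "'r \<Rightarrow> nat \<Rightarrow> 'w set" where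
  "heavy r m = {\<omega>\<in>space M. \<forall>k. 1 < emeasure (W k r \<omega>) (cube m)}"

definition heavy_prob :: real where
  "heavy_prob = enn2real (\<integral>\<^sup>+s. gamma_tail s \<partial>gamma_law 1) ^ CARD('k)"

lemma sets_heavy[measurable]: "heavy r m \<in> sets M"
  unfolding heavy_def by measurable

lemma emeasure_INT_heavy:
  assumes U: "finite U"
  shows "emeasure M (space M \<inter> (\<Inter>m\<in>U. heavy r m))
    = (\<integral>\<^sup>+s. gamma_tail s \<partial>gamma_law 1) ^ (CARD('k) * card U)"
proof -
  let ?I = "(UNIV :: 'k set) \<times> U"
  have "space M \<inter> (\<Inter>m\<in>U. heavy r m)
      = space M \<inter> {\<omega>\<in>space M. \<forall>a\<in>?I. emeasure (W (fst a) r \<omega>) (cube (snd a)) \<in> {1<..}}"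
    by (auto simp: heavy_def)
  also have "emeasure M \<dots> = (\<integral>\<^sup>+\<omega>. indicator (space M) \<omega> *
      (\<Prod>a\<in>?I. emeasure (gamma_law (emeasure (L (fst a) \<omega>) (cube (snd a)))) {1<..}) \<partial>M)"
  proof (rule emeasure_cond_indep_law[OF law_W space_in_rm_events, where j="\<lambda>a. (fst a, r)", unfolded prod.case])
    fix a b :: "'k \<times> nat" assume "a \<noteq> b" "(fst a, r) = (fst b, r)"
    then show "cube (snd a) \<inter> cube (snd b) = {}"
      by (intro disjoint_cube) (auto simp: prod_eq_iff)
  qed (use U in auto)
  also have "\<dots> = (\<integral>\<^sup>+\<omega>. (\<Prod>a\<in>?I. gamma_tail (emeasure (L (fst a) \<omega>) (cube (snd a)))) \<partial>M)"
    by (intro nn_integral_cong) (simp add: gamma_tail_def)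
  also have "\<dots> = (\<integral>\<^sup>+s. gamma_tail s \<partial>gamma_law 1) ^ (CARD('k) * card U)"
    using U by (simp add: nn_integral_prod_L_cube card_cartesian_product)
  finally show ?thesis .
qed

lemma prob_INT_heavy: "finite U \<Longrightarrow> prob (space M \<inter> (\<Inter>m\<in>U. heavy r m)) = heavy_prob ^ card U"
  unfolding measure_def heavy_prob_def
  by (simp add: emeasure_INT_heavy enn2real_power power_mult)

lemma heavy_prob_pos: "0 < heavy_prob"
proof -
  \<comment> \<open>the gamma-tail integral is finite because its powers are probabilities\<close>
  have "emeasure M (space M \<inter> (\<Inter>m\<in>{0}. heavy undefined m)) \<le> 1"
    by (metis emeasure_space emeasure_space_1)
  then have "(\<integral>\<^sup>+s. gamma_tail s \<partial>gamma_law 1) ^ CARD('k) \<le> 1"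
    by (simp only: emeasure_INT_heavy finite.intros card_1_singleton_iff) simp
  then have "(\<integral>\<^sup>+s. gamma_tail s \<partial>gamma_law 1) \<noteq> \<top>"
    by (auto simp: power_eq_top_ennreal top_unique)
  with nn_integral_gamma_tail_pos show ?thesis
    by (simp add: heavy_prob_def enn2real_positive_iff less_top)
qed

lemma heavy_prob_le_1: "heavy_prob \<le> 1"
  using prob_INT_heavy[of "{0}" undefined] prob_le_1[of "heavy undefined 0"] by simp

lemma one_le_T_mean_tuple_cube:
  assumes heavy: "\<omega> \<in> heavy r m" and sf: "\<forall>k r. sigma_finite_measure (W k r \<omega>)"
  shows "1 \<le> T_mean (\<lambda>k r. W k r \<omega>) (tuple_cube m)"
proof -
  have \<omega>: "\<omega> \<in> space M"
    using heavy by (simp add: heavy_def)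
  have "(\<Prod>k\<in>(UNIV :: 'k set). 1) \<le> (\<Prod>k\<in>UNIV. emeasure (W k r \<omega>) (cube m))"
    using heavy by (intro prod_mono_ennreal) (auto simp: heavy_def less_imp_le)
  also have "\<dots> \<le> (\<Sum>r'\<in>UNIV. \<Prod>k\<in>UNIV. emeasure (W k r' \<omega>) (cube m))"
    by (rule member_le_sum) auto
  also have "\<dots> = T_mean (\<lambda>k r. W k r \<omega>) (tuple_cube m)"
    unfolding tuple_cube_def using sf by (intro T_mean_PiE[symmetric]) (auto simp: sets_W[OF \<omega>])
  finally show ?thesis
    by simp
qed

lemma emeasure_poisson_law_T_mean_zero_le:
  assumes "\<forall>k r. sigma_finite_measure (W k r \<omega>)"
  shows "emeasure (poisson_law (T_mean (\<lambda>k r. W k r \<omega>) (tuple_cube m))) {0}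
    \<le> ennreal (1 - (1 - exp (- 1)) * indicator (heavy r m) \<omega>)"
proof (cases "\<omega> \<in> heavy r m")
  case True
  then show ?thesis
    using emeasure_poisson_law_zero_le[OF one_le_T_mean_tuple_cube[OF True assms]] by simp
qed (simp add: emeasure_poisson_law_zero)

lemma emeasure_T_tuple_cubes_null:
  assumes S: "finite S"
  shows "emeasure M {\<omega>\<in>space M. \<forall>m\<in>S. emeasure (T \<omega>) (tuple_cube m) = 0}
    \<le> ennreal ((1 - (1 - exp (- 1)) * heavy_prob) ^ card S)"
proof -
  define c :: real where "c = 1 - exp (- 1)"
  \<comment> \<open>any index r will do\<close>
  define f where "f \<omega> = (\<Prod>m\<in>S. 1 - c * indicator (heavy undefined m) \<omega>)" for \<omega>
  have factor: "0 \<le> 1 - c * indicator (heavy r m) \<omega> \<and> 1 - c * indicator (heavy r m) \<omega> \<le> 1" for r m \<omega>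
    by (auto simp: c_def indicator_def)
  have "emeasure M {\<omega>\<in>space M. \<forall>m\<in>S. emeasure (T \<omega>) (tuple_cube m) = 0}
      = emeasure M (space M \<inter> {\<omega>\<in>space M. \<forall>m\<in>S. emeasure (T \<omega>) (tuple_cube m) \<in> {0}})"
    by (simp add: Int_absorb1)
  also have "\<dots> = (\<integral>\<^sup>+\<omega>. indicator (space M) \<omega> *
      (\<Prod>m\<in>S. emeasure (poisson_law (T_mean (\<lambda>k r. W k r \<omega>) (tuple_cube m))) {0}) \<partial>M)"
    by (rule emeasure_cond_indep_law[OF law_T space_in_rm_events S]) (auto simp: disjoint_tuple_cube)
  also have "\<dots> \<le> (\<integral>\<^sup>+\<omega>. ennreal (f \<omega>) \<partial>M)"
    using AE_sigma_finite_W
  proof (rule nn_integral_mono_AE[OF AE_mp], intro AE_I2 impI)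
    fix \<omega> assume "\<forall>k r. sigma_finite_measure (W k r \<omega>)"
    then have "(\<Prod>m\<in>S. emeasure (poisson_law (T_mean (\<lambda>k r. W k r \<omega>) (tuple_cube m))) {0})
        \<le> (\<Prod>m\<in>S. ennreal (1 - c * indicator (heavy undefined m) \<omega>))"
      unfolding c_def by (intro prod_mono_ennreal emeasure_poisson_law_T_mean_zero_le)
    also have "\<dots> = ennreal (f \<omega>)"
      unfolding f_def using factor by (intro prod_ennreal) auto
    finally show "indicator (space M) \<omega> *
        (\<Prod>m\<in>S. emeasure (poisson_law (T_mean (\<lambda>k r. W k r \<omega>) (tuple_cube m))) {0}) \<le> ennreal (f \<omega>)"
      by (simp add: indicator_def)
  qed
  also have "\<dots> = ennreal (\<integral>\<omega>. f \<omega> \<partial>M)"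
    unfolding f_def using factor
    by (intro nn_integral_eq_integral integrable_const_bound[where B=1] AE_I2)
       (auto simp: prod_nonneg abs_le_iff intro: prod_le_1 order_trans[of _ 0 1])
  also have "(\<integral>\<omega>. f \<omega> \<partial>M) = (1 - c * heavy_prob) ^ card S"
    unfolding f_def by (rule integral_prod_one_minus_indicator[OF S]) (auto simp: prob_INT_heavy finite_subset[OF _ S])
  finally show ?thesis
    by (simp add: c_def)
qed

lemma AE_infinite_nonnull_tuple_cubes: "AE \<omega> in M. infinite {m. emeasure (T \<omega>) (tuple_cube m) \<noteq> 0}"
proof -
  let ?q = "1 - (1 - exp (- 1)) * heavy_prob"
  have "(1 - exp (- 1)) * heavy_prob \<le> 1 * 1"
    using heavy_prob_pos heavy_prob_le_1 by (intro mult_mono) auto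
  then have q: "0 \<le> ?q" "?q < 1"
    using heavy_prob_pos by auto
  have "AE \<omega> in M. \<exists>m\<ge>N. emeasure (T \<omega>) (tuple_cube m) \<noteq> 0" for N
  proof -
    define Z where "Z = {\<omega>\<in>space M. \<forall>m\<ge>N. emeasure (T \<omega>) (tuple_cube m) = 0}"
    have Z: "Z \<in> sets M"
      unfolding Z_def by measurable
    have "emeasure M Z \<le> ennreal (?q ^ n)" for n
    proof -
      have "emeasure M Z \<le> emeasure M {\<omega>\<in>space M. \<forall>m\<in>{N..<N + n}. emeasure (T \<omega>) (tuple_cube m) = 0}"
        by (intro emeasure_mono) (auto simp: Z_def)
      also have "\<dots> \<le> ennreal (?q ^ n)"
        using emeasure_T_tuple_cubes_null[of "{N..<N + n}"] by simp
      finally show ?thesis .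
    qed
    moreover have "(\<lambda>n. ennreal (?q ^ n)) \<longlonglongrightarrow> ennreal 0"
      using q by (intro tendsto_ennrealI LIMSEQ_power_zero) auto
    ultimately have "emeasure M Z = 0"
      using LIMSEQ_le_const[of "\<lambda>n. ennreal (?q ^ n)" 0 "emeasure M Z"] by auto
    then show ?thesis
      using AE_iff_measurable[OF Z] by (auto simp: Z_def)
  qed
  then show ?thesis
    by (simp add: AE_all_countable infinite_nat_iff_unbounded_le)
qed

lemma AE_infinite_tuple_cubes_with_atoms: "AE \<omega> in M. infinite {m. \<exists>x\<in>tuple_cube m. 0 < emeasure (T \<omega>) {x}}"
proof -
  have fin: "AE \<omega> in M. emeasure (T \<omega>) (tuple_cube m) \<noteq> \<top>" for m
    unfolding tuple_cube_def by (intro AE_T_PiE_finite bounded_cube sets_cube)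
  have "AE \<omega> in M. \<forall>m. emeasure (T \<omega>) (tuple_cube m) \<noteq> \<top> \<and> nat_valued_on_cells (T \<omega>) (tuple_cube m)"
    by (simp only: AE_all_countable AE_conj_iff) (intro allI conjI fin AE_nat_valued_on_cells[OF sets_tuple_cube])
  with AE_infinite_nonnull_tuple_cubes AE_space show ?thesis
  proof eventually_elim
    case (elim \<omega>)
    then have "{m. emeasure (T \<omega>) (tuple_cube m) \<noteq> 0} \<subseteq> {m. \<exists>x\<in>tuple_cube m. 0 < emeasure (T \<omega>) {x}}"
      using ex_atom[OF sets_T sets_tuple_cube] by blast
    with elim show ?case
      using infinite_super by blast
  qed
qed

end

theorem lemma3p1:
  fixes M :: "'w measure"
    and L :: "'k::finite \<Rightarrow> 'w \<Rightarrow> (real^'d::finite) measure"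
    and W :: "'k \<Rightarrow> 'r::finite \<Rightarrow> 'w \<Rightarrow> (real^'d) measure"
    and T :: "'w \<Rightarrow> ('k \<Rightarrow> real^'d) measure"
  assumes "coupled_construction M L W T"
  shows "(\<forall>\<alpha>>0. AE \<omega> in M. finite (points_T \<alpha> (T \<omega>))) \<and>
         (AE \<omega> in M. filterlim (\<lambda>\<alpha>. card (points_T \<alpha> (T \<omega>))) at_top at_top)"
proof -
  interpret coupled_process M L W T
    by unfold_locales (fact assms)
  have "AE \<omega> in M. \<forall>n::nat. finite (points_T (real n) (T \<omega>))"
    by (simp add: AE_all_countable AE_finite_points_T)
  with AE_infinite_tuple_cubes_with_atoms
  have "AE \<omega> in M. filterlim (\<lambda>\<alpha>. card (points_T \<alpha> (T \<omega>))) at_top at_top"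
    by eventually_elim (auto intro!: filterlim_card_points_T)
  with AE_finite_points_T show ?thesis
    by blast
qed

end
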